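(* Let $\|\cdot\|$ be a norm on $\mathbb{M}_n$ and let $\|\cdot\|_*$ be its dual norm. The closed unit ball of $\|\cdot\|_*$ is $C^*$-convex if and only if $\|\cdot\|$ is an $L$-norm.
   Context: $\mathbb{M}_n$ is the algebra of complex $n\times n$ matrices with identity $I$. The dual norm is $\|Y\|_*=\sup\{|\mathrm{Tr}(Y^*X)| : X\in\mathbb{M}_n,\ \|X\|\le 1\}$. A subset $\mathscr{K}\subseteq\mathbb{M}_n$ is $C^*$-convex if whenever $A_1,\dots,A_k\in\mathscr{K}$ and $C_1,\dots,C_k\in\mathbb{M}_n$ satisfy $\sum_{i=1}^k C_i^*C_i=I$, then $\sum_{i=1}^k C_i^*A_iC_i\in\mathscr{K}$. A norm $\|\cdot\|$ is an $L$-norm if $\sum_{i=1}^k\|C_iXC_i^*\|\le\|X\|$ for all $k$, all $X$ and all $C_1,\dots,C_k$ with $\sum_{i=1}^k C_i^*C_i=I$. *)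

theory Defs
  imports "HOL-Analysis.Analysis"
begin

type_synonym 'n cmat = "complex^'n^'n"

definition mat_adj :: "'n::finite cmat \<Rightarrow> 'n cmat" where
  "mat_adj A = (\<chi> i j. cnj (A $ j $ i))"

definition mat_trace :: "'n::finite cmat \<Rightarrow> complex" where
  "mat_trace A = (\<Sum>i\<in>UNIV. A $ i $ i)"

definition mat_cscale :: "complex \<Rightarrow> 'n::finite cmat \<Rightarrow> 'n cmat" where
  "mat_cscale c A = (\<chi> i j. c * A $ i $ j)"

definition is_matrix_norm :: "('n::finite cmat \<Rightarrow> real) \<Rightarrow> bool" where
  "is_matrix_norm N \<longleftrightarrow>
     (\<forall>X. N X \<ge> 0) \<and> (\<forall>X. N X = 0 \<longleftrightarrow> X = 0) \<and>
     (\<forall>X Y. N (X + Y) \<le> N X + N Y) \<and>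
     (\<forall>c X. N (mat_cscale c X) = cmod c * N X)"

definition dual_norm :: "('n::finite cmat \<Rightarrow> real) \<Rightarrow> 'n cmat \<Rightarrow> real" where
  "dual_norm N Y = Sup {cmod (mat_trace (mat_adj Y ** X)) | X. N X \<le> 1}"

definition C_star_convex :: "'n::finite cmat set \<Rightarrow> bool" where
  "C_star_convex K \<longleftrightarrow>
     (\<forall>(k::nat) (A::nat \<Rightarrow> 'n cmat) (C::nat \<Rightarrow> 'n cmat).
        (\<forall>i<k. A i \<in> K) \<and> (\<Sum>i<k. mat_adj (C i) ** C i) = mat 1 \<longrightarrow>
        (\<Sum>i<k. mat_adj (C i) ** A i ** C i) \<in> K)"

definition is_L_norm :: "('n::finite cmat \<Rightarrow> real) \<Rightarrow> bool" where
  "is_L_norm N \<longleftrightarrow>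
     (\<forall>(k::nat) (X::'n cmat) (C::nat \<Rightarrow> 'n cmat).
        (\<Sum>i<k. mat_adj (C i) ** C i) = mat 1 \<longrightarrow>
        (\<Sum>i<k. N (C i ** X ** mat_adj (C i))) \<le> N X)"

end

theory Submission
  imports Defs
begin

text \<open>
  Writing \<open>\<langle>Y, X\<rangle> = Tr (Y\<^sup>* X)\<close>, the map \<open>X \<mapsto> C X C\<^sup>*\<close> is adjoint to \<open>A \<mapsto> C\<^sup>* A C\<close>, so
  \<open>\<langle>\<Sum> C\<^sub>i\<^sup>* A\<^sub>i C\<^sub>i, X\<rangle> = \<Sum> \<langle>A\<^sub>i, C\<^sub>i X C\<^sub>i\<^sup>*\<rangle>\<close>.
  If the norm is an \<open>L\<close>-norm and all \<open>A\<^sub>i\<close> lie in the dual unit ball, the right-hand side is at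
  most \<open>\<Sum> \<parallel>C\<^sub>i X C\<^sub>i\<^sup>*\<parallel> \<le> \<parallel>X\<parallel>\<close>, so the \<open>C\<^sup>*\<close>-convex combination stays in the dual ball.
  Conversely, choose by Hahn--Banach (a supporting hyperplane of the unit ball) norming
  functionals \<open>A\<^sub>i\<close> of the dual ball with \<open>\<langle>A\<^sub>i, C\<^sub>i X C\<^sub>i\<^sup>*\<rangle> = \<parallel>C\<^sub>i X C\<^sub>i\<^sup>*\<parallel>\<close>; \<open>C\<^sup>*\<close>-convexity puts
  \<open>\<Sum> C\<^sub>i\<^sup>* A\<^sub>i C\<^sub>i\<close> into the dual ball, and the same identity yields \<open>\<Sum> \<parallel>C\<^sub>i X C\<^sub>i\<^sup>*\<parallel> \<le> \<parallel>X\<parallel>\<close>.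
\<close>

lemma mat_adj_mult: "mat_adj (A ** B) = mat_adj B ** mat_adj (A::'n::finite cmat)"
  by (simp add: mat_adj_def matrix_matrix_mult_def vec_eq_iff mult.commute)

lemma mat_adj_adj [simp]: "mat_adj (mat_adj A) = (A::'n::finite cmat)"
  by (simp add: mat_adj_def vec_eq_iff)

lemma mat_adj_sum: "mat_adj (\<Sum>i\<in>S. f i) = (\<Sum>i\<in>S. mat_adj (f i::'n::finite cmat))"
  by (simp add: mat_adj_def vec_eq_iff sum_component)

lemma mat_trace_sum: "mat_trace (\<Sum>i\<in>S. f i) = (\<Sum>i\<in>S. mat_trace (f i::'n::finite cmat))"
  unfolding mat_trace_def by (simp add: sum_component) (rule sum.swap)

lemma mat_trace_mult_commute: "mat_trace (A ** B) = mat_trace (B ** (A::'n::finite cmat))"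
  unfolding mat_trace_def matrix_matrix_mult_def
  by (simp, subst sum.swap) (simp add: mult.commute)

lemma matrix_mul_sum_left: "(\<Sum>i\<in>S. f i) ** X = (\<Sum>i\<in>S. f i ** (X::'n::finite cmat))"
  by (simp add: matrix_matrix_mult_def vec_eq_iff sum_component sum_distrib_right)
     (intro allI sum.swap)

lemma mat_trace_adj_mult_cscale:
  "mat_trace (mat_adj Y ** mat_cscale c X) = c * mat_trace (mat_adj Y ** (X::'n::finite cmat))"
  unfolding mat_trace_def matrix_matrix_mult_def mat_cscale_def
  by (simp add: sum_distrib_left algebra_simps)

lemma mat_cscale_of_real: "mat_cscale (of_real r) X = r *\<^sub>R (X::'n::finite cmat)"
  unfolding mat_cscale_def vec_eq_iff by (simp add: scaleR_conv_of_real[where 'a=complex])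

lemma Re_mat_trace_adj_mult: "Re (mat_trace (mat_adj Y ** X)) = Y \<bullet> (X::'n::finite cmat)"
  unfolding mat_trace_def matrix_matrix_mult_def mat_adj_def inner_complex_def inner_vec_def
  by (simp add: Re_sum) (rule sum.swap)

lemma mat_trace_adj_congruence_sum:
  "mat_trace (mat_adj (\<Sum>i<k. mat_adj (C i) ** A i ** C i) ** X)
   = (\<Sum>i<k. mat_trace (mat_adj (A i) ** (C i ** X ** mat_adj (C i::'n::finite cmat))))"
proof -
  have "mat_trace (mat_adj (C i) ** mat_adj (A i) ** C i ** X)
      = mat_trace (mat_adj (A i) ** (C i ** X ** mat_adj (C i)))" for i
    using mat_trace_mult_commute[of "mat_adj (C i)" "mat_adj (A i) ** C i ** X"]
    by (simp add: matrix_mul_assoc)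
  then show ?thesis
    by (simp add: mat_adj_sum mat_adj_mult matrix_mul_sum_left mat_trace_sum matrix_mul_assoc)
qed

lemma exists_unimodular_rotation_to_norm: "\<exists>c. cmod c = 1 \<and> c * z = of_real (cmod z)"
proof (cases "z = 0")
  case False
  then show ?thesis
    by (intro exI[of _ "cnj z / cmod z"])
       (simp add: norm_divide complex_norm_square[symmetric] field_simps power2_eq_square)
qed (intro exI[of _ 1], simp)

text \<open>
  Rotating \<open>X\<close> by a unimodular scalar makes the complex pairing real, which reduces the complex dual
  norm to the real inner product of the underlying euclidean space.
\<close>
lemma mat_trace_adj_mult_rotation:
  "\<exists>c. cmod c = 1 \<and> cmod (mat_trace (mat_adj Y ** X)) = Y \<bullet> mat_cscale c (X::'n::finite cmat)"
proof -
  obtain c where "cmod c = 1" and "c * mat_trace (mat_adj Y ** X) = of_real (cmod (mat_trace (mat_adj Y ** X)))"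
    using exists_unimodular_rotation_to_norm by blast
  then show ?thesis
    by (metis Re_complex_of_real Re_mat_trace_adj_mult mat_trace_adj_mult_cscale)
qed

lemma complex_eq_1_if_Re_eq_1: "Re z = 1 \<Longrightarrow> cmod z \<le> 1 \<Longrightarrow> z = 1"
  by (metis complex_Re_le_cmod complex_eq_iff dual_order.antisym one_complex.simps
        cmod_power2 power2_eq_square add_cancel_left_right mult_eq_0_iff)

locale real_seminorm =
  fixes N :: "'a::euclidean_space \<Rightarrow> real"
  assumes subadditive: "N (x + y) \<le> N x + N y"
    and scaleR: "N (r *\<^sub>R x) = \<bar>r\<bar> * N x"
begin

lemma zero [simp]: "N 0 = 0"
  using scaleR[of 0 0] by simp

lemma nonneg: "0 \<le> N x"
  using subadditive[of x "- x"] scaleR[of "- 1" x] by simp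

lemma convex_on_UNIV: "convex_on UNIV N"
proof (rule convex_onI)
  fix t :: real and x y :: 'a
  assume "0 < t" "t < 1"
  then show "N ((1 - t) *\<^sub>R x + t *\<^sub>R y) \<le> (1 - t) * N x + t * N y"
    using subadditive[of "(1 - t) *\<^sub>R x" "t *\<^sub>R y"] by (simp add: scaleR)
qed simp

lemma continuous_on_UNIV: "continuous_on UNIV N"
  by (rule convex_on_continuous[OF open_UNIV convex_on_UNIV])

lemma exists_mult_norm_le:
  assumes definite: "\<And>x. N x = 0 \<Longrightarrow> x = 0"
  obtains c where "0 < c" and "\<And>x. c * norm x \<le> N x"
proof -
  obtain x0 :: 'a where "norm x0 = 1"
    using norm_Basis SOME_Basis by blast
  then have "sphere (0::'a) 1 \<noteq> {}" by auto
  then obtain u where u: "u \<in> sphere 0 1" and min: "\<And>y. y \<in> sphere 0 1 \<Longrightarrow> N u \<le> N y"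
    using continuous_attains_inf[OF compact_sphere _ continuous_on_subset[OF continuous_on_UNIV]] by blast
  have "0 < N u"
    using u definite nonneg[of u] by (metis less_eq_real_def mem_sphere_0 zero_neq_one norm_zero)
  moreover have "N u * norm x \<le> N x" for x
  proof (cases "x = 0")
    case False
    then have "N u \<le> N ((1 / norm x) *\<^sub>R x)" by (intro min) simp
    also have "\<dots> = N x / norm x" by (simp add: scaleR)
    finally show ?thesis using False by (simp add: field_simps)
  qed simp
  ultimately show thesis by (rule that)
qed

lemma exists_supporting_functional:
  assumes "N w = 1"
  obtains a where "\<And>x. N x \<le> 1 \<Longrightarrow> a \<bullet> x \<le> 1" and "a \<bullet> w = 1"
proof -
  define B where "B = {x. N x \<le> 1}"
  have "convex B"
    unfolding B_def convex_def by (auto intro!: convex_lower[OF convex_on_UNIV, THEN order_trans])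
  have "closed B"
    unfolding B_def by (rule closed_Collect_le[OF continuous_on_UNIV continuous_on_const])
  have "{x. N x < 1} \<subseteq> interior B"
    by (rule interior_maximal) (auto simp: B_def intro: open_Collect_less[OF continuous_on_UNIV continuous_on_const])
  then have "0 \<in> interior B" by auto
  then have rel: "rel_interior B = interior B"
    by (intro rel_interior_nonempty_interior) auto
  have "w \<notin> interior B"
  proof
    assume "w \<in> interior B"
    then obtain e where "0 < e" and ball: "ball w e \<subseteq> B" by (meson mem_interior)
    have "w \<noteq> 0" using assms by auto
    define t where "t = e / (2 * norm w)"
    have "0 < t" using \<open>0 < e\<close> \<open>w \<noteq> 0\<close> by (simp add: t_def)
    have "dist w ((1 + t) *\<^sub>R w) = e / 2"
      using \<open>0 < e\<close> \<open>w \<noteq> 0\<close> by (simp add: t_def dist_norm algebra_simps)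
    then have "(1 + t) *\<^sub>R w \<in> B" using ball \<open>0 < e\<close> by auto
    then show False using \<open>0 < t\<close> assms by (simp add: B_def scaleR)
  qed
  moreover have "w \<in> closure B" using assms \<open>closed B\<close> by (simp add: B_def)
  ultimately obtain a where
    supp: "\<And>y. y \<in> closure B \<Longrightarrow> a \<bullet> w \<le> a \<bullet> y" and
    strict: "\<And>y. y \<in> rel_interior B \<Longrightarrow> a \<bullet> w < a \<bullet> y"
    using supporting_hyperplane_relative_frontier[OF \<open>convex B\<close>] rel by metis
  have "a \<bullet> w < 0" using strict[of 0] rel \<open>0 \<in> interior B\<close> by simp
  \<comment> \<open>so dividing by \<open>a \<bullet> w\<close> turns the support inequality \<open>a \<bullet> w \<le> a \<bullet> x\<close> into \<open>\<le> 1\<close>\<close>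
  show thesis
  proof (rule that[of "(1 / (a \<bullet> w)) *\<^sub>R a"])
    fix x assume "N x \<le> 1"
    then have "a \<bullet> w \<le> a \<bullet> x" using supp \<open>closed B\<close> by (simp add: B_def)
    then show "(1 / (a \<bullet> w)) *\<^sub>R a \<bullet> x \<le> 1"
      using \<open>a \<bullet> w < 0\<close> by (simp add: field_simps)
  qed (use \<open>a \<bullet> w < 0\<close> in simp)
qed

end

lemma matrix_norm_cscale: "is_matrix_norm N \<Longrightarrow> N (mat_cscale c X) = cmod c * N X"
  unfolding is_matrix_norm_def by blast

lemma matrix_norm_eq_0_iff: "is_matrix_norm N \<Longrightarrow> N X = 0 \<longleftrightarrow> X = 0"
  unfolding is_matrix_norm_def by blast

lemma real_seminorm_if_matrix_norm:
  assumes "is_matrix_norm (N::'n::finite cmat \<Rightarrow> real)"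
  shows "real_seminorm N"
proof
  show "N (X + Y) \<le> N X + N Y" for X Y
    using assms unfolding is_matrix_norm_def by blast
  show "N (r *\<^sub>R X) = \<bar>r\<bar> * N X" for r X
    using matrix_norm_cscale[OF assms, of "of_real r" X] by (simp add: mat_cscale_of_real)
qed

context
  fixes N :: "'n::finite cmat \<Rightarrow> real"
  assumes N: "is_matrix_norm N"
begin

interpretation real_seminorm N
  by (rule real_seminorm_if_matrix_norm[OF N])

lemma dual_norm_bdd_above: "bdd_above {cmod (mat_trace (mat_adj Y ** X)) | X. N X \<le> 1}"
proof -
  obtain c where "0 < c" and c: "\<And>X. c * norm X \<le> N X"
    using exists_mult_norm_le matrix_norm_eq_0_iff[OF N] by blast
  show ?thesis
  proof (rule bdd_aboveI, safe)
    fix X :: "'n cmat" assume "N X \<le> 1"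
    obtain u where "cmod u = 1" and u: "cmod (mat_trace (mat_adj Y ** X)) = Y \<bullet> mat_cscale u X"
      using mat_trace_adj_mult_rotation by blast
    have "c * norm (mat_cscale u X) \<le> 1"
      using c[of "mat_cscale u X"] \<open>N X \<le> 1\<close> \<open>cmod u = 1\<close> by (simp add: matrix_norm_cscale[OF N])
    then have "norm (mat_cscale u X) \<le> 1 / c"
      using \<open>0 < c\<close> by (simp add: field_simps mult.commute)
    then have "norm Y * norm (mat_cscale u X) \<le> norm Y * (1 / c)"
      by (rule mult_left_mono) simp
    then show "cmod (mat_trace (mat_adj Y ** X)) \<le> norm Y * (1 / c)"
      using u norm_cauchy_schwarz[of Y "mat_cscale u X"] by linarith
  qed
qed

lemma mat_trace_le_dual_norm: "N X \<le> 1 \<Longrightarrow> cmod (mat_trace (mat_adj Y ** X)) \<le> dual_norm N Y"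
  unfolding dual_norm_def by (rule cSup_upper[OF _ dual_norm_bdd_above]) blast

lemma mat_trace_le_dual_norm_mult: "cmod (mat_trace (mat_adj Y ** X)) \<le> dual_norm N Y * N X"
proof (cases "X = 0")
  case True
  then show ?thesis by (simp add: matrix_matrix_mult_def mat_trace_def)
next
  case False
  then have "0 < N X" using nonneg matrix_norm_eq_0_iff[OF N] by (metis less_eq_real_def)
  have "cmod (mat_trace (mat_adj Y ** mat_cscale (of_real (1 / N X)) X)) \<le> dual_norm N Y"
    using \<open>0 < N X\<close> by (intro mat_trace_le_dual_norm) (simp add: matrix_norm_cscale[OF N] norm_divide)
  then show ?thesis
    using \<open>0 < N X\<close> by (simp add: mat_trace_adj_mult_cscale norm_divide pos_divide_le_eq mult.commute)
qed

lemma dual_norm_le_oneI: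
  assumes "\<And>X. N X \<le> 1 \<Longrightarrow> cmod (mat_trace (mat_adj Y ** X)) \<le> 1"
  shows "dual_norm N Y \<le> 1"
  unfolding dual_norm_def
proof (rule cSup_least)
  have "N 0 \<le> 1" by simp
  then show "{cmod (mat_trace (mat_adj Y ** X)) | X. N X \<le> 1} \<noteq> {}" by blast
qed (use assms in blast)

lemma exists_norming_dual_ball_element:
  "\<exists>Y. dual_norm N Y \<le> 1 \<and> mat_trace (mat_adj Y ** Z) = of_real (N Z)"
proof (cases "Z = 0")
  case True
  have "dual_norm N 0 \<le> 1"
    by (rule dual_norm_le_oneI) (simp add: mat_adj_def mat_trace_def matrix_matrix_mult_def)
  then show ?thesis
    using True by (intro exI[of _ 0]) (simp add: mat_adj_def mat_trace_def matrix_matrix_mult_def)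
next
  case False
  then have "0 < N Z" using nonneg matrix_norm_eq_0_iff[OF N] by (metis less_eq_real_def)
  define W where "W = (1 / N Z) *\<^sub>R Z"
  have "N W = 1" using \<open>0 < N Z\<close> by (simp add: W_def scaleR)
  then obtain Y where Y_le: "\<And>X. N X \<le> 1 \<Longrightarrow> Y \<bullet> X \<le> 1" and "Y \<bullet> W = 1"
    using exists_supporting_functional by blast
  have "dual_norm N Y \<le> 1"
  proof (rule dual_norm_le_oneI)
    fix X :: "'n cmat" assume "N X \<le> 1"
    obtain u where "cmod u = 1" and "cmod (mat_trace (mat_adj Y ** X)) = Y \<bullet> mat_cscale u X"
      using mat_trace_adj_mult_rotation by blast
    then show "cmod (mat_trace (mat_adj Y ** X)) \<le> 1"
      using Y_le[of "mat_cscale u X"] \<open>N X \<le> 1\<close> by (simp add: matrix_norm_cscale[OF N])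
  qed
  moreover have "mat_trace (mat_adj Y ** W) = 1"
  proof (rule complex_eq_1_if_Re_eq_1)
    show "Re (mat_trace (mat_adj Y ** W)) = 1" using \<open>Y \<bullet> W = 1\<close> by (simp add: Re_mat_trace_adj_mult)
    show "cmod (mat_trace (mat_adj Y ** W)) \<le> 1"
      using mat_trace_le_dual_norm[of W Y] \<open>N W = 1\<close> \<open>dual_norm N Y \<le> 1\<close> by simp
  qed
  moreover have "Z = mat_cscale (of_real (N Z)) W"
    using \<open>0 < N Z\<close> by (simp add: W_def mat_cscale_of_real)
  ultimately show ?thesis
    by (metis mat_trace_adj_mult_cscale mult.right_neutral)
qed

lemma C_star_convex_dual_ball_if_L_norm:
  assumes L: "is_L_norm N"
  shows "C_star_convex {Y. dual_norm N Y \<le> 1}"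
  unfolding C_star_convex_def
proof (intro allI impI, elim conjE)
  fix k and A C :: "nat \<Rightarrow> 'n cmat"
  assume A: "\<forall>i<k. A i \<in> {Y. dual_norm N Y \<le> 1}" and C: "(\<Sum>i<k. mat_adj (C i) ** C i) = mat 1"
  have "dual_norm N (\<Sum>i<k. mat_adj (C i) ** A i ** C i) \<le> 1"
  proof (rule dual_norm_le_oneI)
    fix X assume "N X \<le> 1"
    have "cmod (mat_trace (mat_adj (\<Sum>i<k. mat_adj (C i) ** A i ** C i) ** X))
        \<le> (\<Sum>i<k. cmod (mat_trace (mat_adj (A i) ** (C i ** X ** mat_adj (C i)))))"
      unfolding mat_trace_adj_congruence_sum by (rule norm_sum)
    also have "\<dots> \<le> (\<Sum>i<k. N (C i ** X ** mat_adj (C i)))"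
    proof (rule sum_mono)
      fix i assume "i \<in> {..<k}"
      then have "dual_norm N (A i) * N (C i ** X ** mat_adj (C i)) \<le> N (C i ** X ** mat_adj (C i))"
        using A mult_right_mono[OF _ nonneg, of "dual_norm N (A i)" 1] by simp
      then show "cmod (mat_trace (mat_adj (A i) ** (C i ** X ** mat_adj (C i)))) \<le> N (C i ** X ** mat_adj (C i))"
        using mat_trace_le_dual_norm_mult[of "A i"] by (rule order_trans[rotated])
    qed
    also have "\<dots> \<le> N X" using L[unfolded is_L_norm_def, rule_format, OF C] .
    finally show "cmod (mat_trace (mat_adj (\<Sum>i<k. mat_adj (C i) ** A i ** C i) ** X)) \<le> 1"
      using \<open>N X \<le> 1\<close> by linarith
  qed
  then show "(\<Sum>i<k. mat_adj (C i) ** A i ** C i) \<in> {Y. dual_norm N Y \<le> 1}" by simp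
qed

lemma L_norm_if_C_star_convex_dual_ball:
  assumes convex: "C_star_convex {Y. dual_norm N Y \<le> 1}"
  shows "is_L_norm N"
  unfolding is_L_norm_def
proof (intro allI impI)
  fix k X and C :: "nat \<Rightarrow> 'n cmat"
  assume C: "(\<Sum>i<k. mat_adj (C i) ** C i) = mat 1"
  have "\<forall>i. \<exists>Y. dual_norm N Y \<le> 1 \<and>
      mat_trace (mat_adj Y ** (C i ** X ** mat_adj (C i))) = of_real (N (C i ** X ** mat_adj (C i)))"
    using exists_norming_dual_ball_element by blast
  then obtain A where A: "\<forall>i. dual_norm N (A i) \<le> 1 \<and>
      mat_trace (mat_adj (A i) ** (C i ** X ** mat_adj (C i))) = of_real (N (C i ** X ** mat_adj (C i)))"
    by (rule choice[THEN exE])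
  define Y where "Y = (\<Sum>i<k. mat_adj (C i) ** A i ** C i)"
  have "dual_norm N Y \<le> 1"
    using convex C A unfolding C_star_convex_def Y_def by blast
  have trace_Y: "mat_trace (mat_adj Y ** X) = of_real (\<Sum>i<k. N (C i ** X ** mat_adj (C i)))"
    unfolding Y_def mat_trace_adj_congruence_sum using A by simp
  have "(\<Sum>i<k. N (C i ** X ** mat_adj (C i))) = cmod (mat_trace (mat_adj Y ** X))"
    unfolding trace_Y norm_of_real by (simp add: sum_nonneg nonneg)
  also have "\<dots> \<le> dual_norm N Y * N X" by (rule mat_trace_le_dual_norm_mult)
  also have "\<dots> \<le> N X" using \<open>dual_norm N Y \<le> 1\<close> mult_right_mono[OF _ nonneg] by fastforce
  finally show "(\<Sum>i<k. N (C i ** X ** mat_adj (C i))) \<le> N X" .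
qed

end

theorem theorem2p5:
  fixes N :: "'n::finite cmat \<Rightarrow> real"
  assumes "is_matrix_norm N"
  shows "C_star_convex {Y. dual_norm N Y \<le> 1} \<longleftrightarrow> is_L_norm N"
  using C_star_convex_dual_ball_if_L_norm[OF assms] L_norm_if_C_star_convex_dual_ball[OF assms] by blast

end
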